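(* Let $A=[a_{ij}]$ be the adjacency matrix of a strongly connected, aperiodic directed graph on $\mathcal X=\{1,\ldots,n\}$, and let $N\ge1$ be such that all entries of $A^N$ are positive. Let $\lambda_A$, $u,v>0$ with $A^Tu=\lambda_Au$, $Av=\lambda_Av$, $\sum_iu_iv_i=1$, $\nu_{RB}(i)=u_iv_i$, $r_{ij}=\frac{v_j}{\lambda_Av_i}a_{ij}$, and $\mathfrak M_{\rm RB}(x_0,\ldots,x_N)=\nu_{RB}(x_0)r_{x_0x_1}\cdots r_{x_{N-1}x_N}$. Let $\mu_0$ be a measure on $\mathcal X$ with $\mu_0(x)>0$ for all $x$ and $\mathfrak M(x_0,\ldots,x_N)=\mu_0(x_0)a_{x_0x_1}\cdots a_{x_{N-1}x_N}$. Let $\mathcal P(\delta_1,\delta_n)$ be the set of probability distributions on $\mathcal X^{N+1}$ with marginal at time $0$ equal to the point mass $\delta_1$ at node $1$ and marginal at time $N$ equal to the point mass $\delta_n$ at node $n$. Then the minimizer $\mathfrak M^*[\delta_1,\delta_n]$ of $\mathbb D(P\|\mathfrak M_{\rm RB})$ over $P\in\mathcal P(\delta_1,\delta_n)$ also solves the problem $\min\{\mathbb D(P\|\mathfrak M)\mid P\in\mathcal P(\delta_1,\delta_n)\}$.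
   Context: Relative entropy of a probability distribution $P$ with respect to a nonnegative measure $Q$ on a finite set: $\mathbb D(P\|Q)=\sum_x P(x)\log\frac{P(x)}{Q(x)}$ if $\mathrm{supp}(P)\subseteq\mathrm{supp}(Q)$ (with $0\log0=0$), and $+\infty$ otherwise. *)

theory Defs
  imports "HOL-Analysis.Analysis"
begin

text \<open>Nodes are X = {1..n}; matrices are functions nat => nat => real restricted to X.\<close>

definition nodes :: "nat \<Rightarrow> nat set" where
  "nodes n = {1..n}"

fun mpow :: "nat \<Rightarrow> (nat \<Rightarrow> nat \<Rightarrow> real) \<Rightarrow> nat \<Rightarrow> nat \<Rightarrow> nat \<Rightarrow> real" where
  "mpow n A 0 i j = (if i = j then 1 else 0)"
| "mpow n A (Suc k) i j = (\<Sum>l\<in>nodes n. mpow n A k i l * A l j)"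

definition adjacency_matrix :: "nat \<Rightarrow> (nat \<Rightarrow> nat \<Rightarrow> real) \<Rightarrow> bool" where
  "adjacency_matrix n A \<longleftrightarrow> (\<forall>i\<in>nodes n. \<forall>j\<in>nodes n. A i j = 0 \<or> A i j = 1)"

definition strongly_connected :: "nat \<Rightarrow> (nat \<Rightarrow> nat \<Rightarrow> real) \<Rightarrow> bool" where
  "strongly_connected n A \<longleftrightarrow>
     (\<forall>i\<in>nodes n. \<forall>j\<in>nodes n. \<exists>k\<ge>1. mpow n A k i j > 0)"

definition aperiodic :: "nat \<Rightarrow> (nat \<Rightarrow> nat \<Rightarrow> real) \<Rightarrow> bool" where
  "aperiodic n A \<longleftrightarrow> Gcd {k. k \<ge> 1 \<and> (\<exists>i\<in>nodes n. mpow n A k i i > 0)} = 1"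

definition paths :: "nat \<Rightarrow> nat \<Rightarrow> nat list set" where
  "paths n N = {xs. length xs = Suc N \<and> set xs \<subseteq> nodes n}"

definition rel_entropy :: "'a set \<Rightarrow> ('a \<Rightarrow> real) \<Rightarrow> ('a \<Rightarrow> real) \<Rightarrow> ereal" where
  "rel_entropy S P Q =
     (if \<forall>x\<in>S. P x \<noteq> 0 \<longrightarrow> Q x \<noteq> 0
      then ereal (\<Sum>x\<in>S. if P x = 0 then 0 else P x * ln (P x / Q x))
      else \<infinity>)"

definition bridge_set :: "nat \<Rightarrow> nat \<Rightarrow> nat \<Rightarrow> nat \<Rightarrow> (nat list \<Rightarrow> real) set" where
  "bridge_set n N a b = {P.
     (\<forall>xs\<in>paths n N. P xs \<ge> 0) \<and> (\<Sum>xs\<in>paths n N. P xs) = 1 \<and>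
     (\<forall>i\<in>nodes n. (\<Sum>xs\<in>{xs\<in>paths n N. xs ! 0 = i}. P xs) = (if i = a then 1 else 0)) \<and>
     (\<forall>i\<in>nodes n. (\<Sum>xs\<in>{xs\<in>paths n N. xs ! N = i}. P xs) = (if i = b then 1 else 0))}"

definition is_minimizer :: "nat \<Rightarrow> nat \<Rightarrow> (nat list \<Rightarrow> real) set \<Rightarrow> (nat list \<Rightarrow> real)
    \<Rightarrow> (nat list \<Rightarrow> real) \<Rightarrow> bool" where
  "is_minimizer n N C Q P \<longleftrightarrow> P \<in> C \<and>
     (\<forall>P'\<in>C. rel_entropy (paths n N) P Q \<le> rel_entropy (paths n N) P' Q)"

definition path_measure :: "nat \<Rightarrow> (nat \<Rightarrow> real) \<Rightarrow> (nat \<Rightarrow> nat \<Rightarrow> real) \<Rightarrow> nat list \<Rightarrow> real" where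
  "path_measure N mu w xs = mu (xs ! 0) * (\<Prod>k<N. w (xs ! k) (xs ! Suc k))"

end

theory Submission
  imports Defs
begin

text \<open>On a path from node 1 to node n the Ruelle-Bowen weights telescope,
  r(x0,x1) \<cdots> r(x(N-1),xN) = v n / (lam^N * v 1) * a(x0,x1) \<cdots> a(x(N-1),xN),
  so on the only paths a distribution in P(delta_1, delta_n) can charge, MRB is a constant
  multiple c * M. Hence D(P||MRB) = D(P||M) - ln c on the whole constraint set and the two
  problems have the same minimizers. A minimizer exists by Gibbs' inequality: M conditioned
  on the paths from 1 to n attains the lower bound -ln M(paths from 1 to n), which is finite
  because the entry (1, n) of A^N is positive.\<close>

lemma finite_paths: "finite (paths n N)"
  unfolding paths_def nodes_def
  using finite_lists_length_eq[of "{1..n}" "Suc N"] by (simp add: conj_commute)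

lemma paths_nth_in_nodes:
  assumes "xs \<in> paths n N" and "k \<le> N"
  shows "xs ! k \<in> nodes n"
  using assms nth_mem[of k xs] unfolding paths_def by auto

lemma mult_ln_div_ge:
  fixes p q z :: real
  assumes "p > 0" and "q > 0" and "z > 0"
  shows "p * (1 - ln z) - q / z \<le> p * ln (p / q)"
proof -
  have "ln (q / (p * z)) \<le> q / (p * z) - 1"
    using assms by (intro ln_le_minus_one) simp
  then have "p * ln (q / (p * z)) \<le> p * (q / (p * z) - 1)"
    by (rule mult_left_mono) (use assms(1) in simp)
  moreover have "ln (q / (p * z)) = - ln (p / q) - ln z"
    using assms by (simp add: ln_div ln_mult)
  ultimately show ?thesis
    using assms by (simp add: algebra_simps)
qed

lemma rel_entropy_ge_neg_ln_mass:
  fixes P Q :: "'a \<Rightarrow> real"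
  assumes S: "finite S" and TS: "T \<subseteq> S"
    and P_nonneg: "\<forall>x\<in>S. P x \<ge> 0" and P_sum: "(\<Sum>x\<in>S. P x) = 1"
    and P_supp: "\<forall>x\<in>S - T. P x = 0"
    and Q_nonneg: "\<forall>x\<in>S. Q x \<ge> 0" and mass: "sum Q T > 0"
  shows "ereal (- ln (sum Q T)) \<le> rel_entropy S P Q"
proof (cases "\<forall>x\<in>S. P x \<noteq> 0 \<longrightarrow> Q x \<noteq> 0")
  case True
  define z where "z = sum Q T"
  have "P x * (1 - ln z) - (if x \<in> T then Q x / z else 0)
      \<le> (if P x = 0 then 0 else P x * ln (P x / Q x))" if x: "x \<in> S" for x
  proof (cases "P x = 0")
    case True
    then show ?thesis using Q_nonneg x mass by (simp add: z_def)
  next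
    case False
    then have "x \<in> T" "P x > 0" "Q x > 0"
      using P_supp P_nonneg Q_nonneg True x by force+
    then show ?thesis
      using mult_ln_div_ge[of "P x" "Q x" z] mass False by (simp add: z_def)
  qed
  then have "(\<Sum>x\<in>S. P x * (1 - ln z) - (if x \<in> T then Q x / z else 0))
      \<le> (\<Sum>x\<in>S. if P x = 0 then 0 else P x * ln (P x / Q x))"
    by (rule sum_mono)
  moreover have "(\<Sum>x\<in>S. P x * (1 - ln z) - (if x \<in> T then Q x / z else 0)) = - ln z"
    using S TS mass
    by (simp add: sum_subtractf sum_distrib_right[symmetric] P_sum sum.inter_restrict[symmetric]
        inf.absorb2 sum_divide_distrib[symmetric] z_def)
  ultimately show ?thesis
    using True by (simp add: rel_entropy_def z_def)
qed (auto simp: rel_entropy_def)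

definition conditional_measure :: "'a set \<Rightarrow> ('a \<Rightarrow> real) \<Rightarrow> 'a \<Rightarrow> real" where
  "conditional_measure T Q x = (if x \<in> T then Q x / sum Q T else 0)"

lemma sum_conditional_measure:
  assumes "finite B"
  shows "sum (conditional_measure T Q) B = sum Q (B \<inter> T) / sum Q T"
  using assms unfolding conditional_measure_def
  by (simp add: sum.inter_restrict sum_divide_distrib if_distrib[of "\<lambda>y. y / _"] cong: if_cong)

lemma rel_entropy_conditional_measure:
  assumes S: "finite S" and TS: "T \<subseteq> S" and mass: "sum Q T > 0"
  shows "rel_entropy S (conditional_measure T Q) Q = ereal (- ln (sum Q T))"
proof -
  let ?P = "conditional_measure T Q"
  have "(if ?P x = 0 then 0 else ?P x * ln (?P x / Q x)) = - (?P x * ln (sum Q T))" for x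
    using mass by (auto simp: conditional_measure_def ln_div)
  then have "(\<Sum>x\<in>S. if ?P x = 0 then 0 else ?P x * ln (?P x / Q x)) = - (sum ?P S * ln (sum Q T))"
    by (simp add: sum_negf sum_distrib_right)
  also have "sum ?P S = 1"
    using S TS mass by (simp add: sum_conditional_measure inf.absorb2)
  finally show ?thesis
    unfolding rel_entropy_def by (auto simp: conditional_measure_def)
qed

lemma rel_entropy_scaled_reference:
  fixes P Q Q' :: "'a \<Rightarrow> real"
  assumes P_nonneg: "\<forall>x\<in>S. P x \<ge> 0" and P_sum: "(\<Sum>x\<in>S. P x) = 1"
    and Q_nonneg: "\<forall>x\<in>S. Q x \<ge> 0" and c: "c > 0"
    and scaled: "\<forall>x\<in>S. P x \<noteq> 0 \<longrightarrow> Q' x = c * Q x"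
  shows "rel_entropy S P Q' = rel_entropy S P Q - ereal (ln c)"
proof (cases "\<forall>x\<in>S. P x \<noteq> 0 \<longrightarrow> Q x \<noteq> 0")
  case True
  have "(if P x = 0 then 0 else P x * ln (P x / Q' x))
      = (if P x = 0 then 0 else P x * ln (P x / Q x)) - P x * ln c" if x: "x \<in> S" for x
  proof (cases "P x = 0")
    case False
    then have "P x > 0" "Q x > 0"
      using P_nonneg Q_nonneg True x by force+
    then show ?thesis
      using False scaled x c by (simp add: ln_div ln_mult algebra_simps)
  qed simp
  then have "(\<Sum>x\<in>S. if P x = 0 then 0 else P x * ln (P x / Q' x))
      = (\<Sum>x\<in>S. if P x = 0 then 0 else P x * ln (P x / Q x)) - ln c"
    by (simp add: sum_subtractf sum_distrib_right[symmetric] P_sum)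
  moreover have "\<forall>x\<in>S. P x \<noteq> 0 \<longrightarrow> Q' x \<noteq> 0"
    using True scaled c by simp
  ultimately show ?thesis
    using True by (simp add: rel_entropy_def)
next
  case False
  then have "\<not> (\<forall>x\<in>S. P x \<noteq> 0 \<longrightarrow> Q' x \<noteq> 0)"
    using scaled by auto
  with False show ?thesis
    by (simp add: rel_entropy_def)
qed

lemma is_minimizer_shifted_objective:
  assumes "\<forall>P\<in>C. rel_entropy (paths n N) P Q' = rel_entropy (paths n N) P Q - ereal d"
  shows "is_minimizer n N C Q' P \<longleftrightarrow> is_minimizer n N C Q P"
proof -
  have "rel_entropy (paths n N) P Q' \<le> rel_entropy (paths n N) P' Q'
      \<longleftrightarrow> rel_entropy (paths n N) P Q \<le> rel_entropy (paths n N) P' Q"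
    if "P \<in> C" "P' \<in> C" for P P'
    using assms that
    by (cases "rel_entropy (paths n N) P Q"; cases "rel_entropy (paths n N) P' Q") auto
  then show ?thesis
    unfolding is_minimizer_def by blast
qed

definition bridge_paths :: "nat \<Rightarrow> nat \<Rightarrow> nat \<Rightarrow> nat \<Rightarrow> nat list set" where
  "bridge_paths n N a b = {xs \<in> paths n N. xs ! 0 = a \<and> xs ! N = b}"

lemma bridge_paths_subset: "bridge_paths n N a b \<subseteq> paths n N"
  unfolding bridge_paths_def by blast

lemma bridge_set_vanishes_off_bridge_paths:
  assumes P: "P \<in> bridge_set n N a b" and xs: "xs \<in> paths n N - bridge_paths n N a b"
  shows "P xs = 0"
proof -
  have P_nonneg: "\<forall>ys\<in>paths n N. P ys \<ge> 0"
    using P by (simp add: bridge_set_def)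
  have vanish: "P xs = 0" if "xs \<in> B" "B \<subseteq> paths n N" "sum P B = 0" for B
    using that P_nonneg finite_subset[OF that(2) finite_paths] sum_nonneg_eq_0_iff[of B P]
    by blast
  have ends: "xs ! 0 \<in> nodes n" "xs ! N \<in> nodes n"
    using xs paths_nth_in_nodes by auto
  consider "xs ! 0 \<noteq> a" | "xs ! N \<noteq> b"
    using xs by (auto simp: bridge_paths_def)
  then show ?thesis
  proof cases
    case 1
    then show ?thesis
      using P ends xs by (intro vanish[of "{ys \<in> paths n N. ys ! 0 = xs ! 0}"]) (auto simp: bridge_set_def)
  next
    case 2
    then show ?thesis
      using P ends xs by (intro vanish[of "{ys \<in> paths n N. ys ! N = xs ! N}"]) (auto simp: bridge_set_def)
  qed
qed

lemma conditional_measure_in_bridge_set: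
  assumes Q_nonneg: "\<forall>xs\<in>paths n N. Q xs \<ge> 0" and mass: "sum Q (bridge_paths n N a b) > 0"
  shows "conditional_measure (bridge_paths n N a b) Q \<in> bridge_set n N a b"
proof -
  let ?T = "bridge_paths n N a b"
  have finite: "finite B" if "B \<subseteq> paths n N" for B
    using that finite_paths finite_subset by blast
  have mass_in: "sum (conditional_measure ?T Q) B = 1" if "?T \<subseteq> B" "B \<subseteq> paths n N" for B
    using that mass finite by (simp add: sum_conditional_measure inf.absorb2)
  have mass_out: "sum (conditional_measure ?T Q) B = 0" if "B \<inter> ?T = {}" "B \<subseteq> paths n N" for B
    using that finite by (simp add: sum_conditional_measure)
  show ?thesis
    unfolding bridge_set_def
  proof (intro CollectI conjI ballI)
    show "conditional_measure ?T Q xs \<ge> 0" if "xs \<in> paths n N" for xs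
      using that Q_nonneg mass by (simp add: conditional_measure_def)
    show "sum (conditional_measure ?T Q) (paths n N) = 1"
      by (rule mass_in) (auto simp: bridge_paths_def)
    show "sum (conditional_measure ?T Q) {xs \<in> paths n N. xs ! 0 = i} = (if i = a then 1 else 0)" for i
      using mass_in[of "{xs \<in> paths n N. xs ! 0 = i}"] mass_out[of "{xs \<in> paths n N. xs ! 0 = i}"]
      by (auto simp: bridge_paths_def)
    show "sum (conditional_measure ?T Q) {xs \<in> paths n N. xs ! N = i} = (if i = b then 1 else 0)" for i
      using mass_in[of "{xs \<in> paths n N. xs ! N = i}"] mass_out[of "{xs \<in> paths n N. xs ! N = i}"]
      by (auto simp: bridge_paths_def)
  qed
qed

lemma bridge_minimizer:
  assumes Q_nonneg: "\<forall>xs\<in>paths n N. Q xs \<ge> 0" and mass: "sum Q (bridge_paths n N a b) > 0"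
  shows "is_minimizer n N (bridge_set n N a b) Q (conditional_measure (bridge_paths n N a b) Q)"
  unfolding is_minimizer_def
proof (intro conjI ballI)
  show "conditional_measure (bridge_paths n N a b) Q \<in> bridge_set n N a b"
    using assms by (rule conditional_measure_in_bridge_set)
  show "rel_entropy (paths n N) (conditional_measure (bridge_paths n N a b) Q) Q
      \<le> rel_entropy (paths n N) P Q" if P: "P \<in> bridge_set n N a b" for P
    unfolding rel_entropy_conditional_measure[OF finite_paths bridge_paths_subset mass]
    using P Q_nonneg mass bridge_set_vanishes_off_bridge_paths[OF P]
    by (intro rel_entropy_ge_neg_ln_mass[OF finite_paths bridge_paths_subset])
      (auto simp: bridge_set_def)
qed

lemma is_minimizer_bridge_set_scaled_reference:
  assumes Q_nonneg: "\<forall>xs\<in>paths n N. Q xs \<ge> 0" and c: "c > 0"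
    and scaled: "\<forall>xs\<in>bridge_paths n N a b. Q' xs = c * Q xs"
  shows "is_minimizer n N (bridge_set n N a b) Q' P \<longleftrightarrow> is_minimizer n N (bridge_set n N a b) Q P"
proof (rule is_minimizer_shifted_objective, intro ballI)
  fix P assume P: "P \<in> bridge_set n N a b"
  show "rel_entropy (paths n N) P Q' = rel_entropy (paths n N) P Q - ereal (ln c)"
    using P Q_nonneg c scaled bridge_set_vanishes_off_bridge_paths[OF P]
    by (intro rel_entropy_scaled_reference) (auto simp: bridge_set_def)
qed

lemma mpow_pos_imp_walk:
  assumes A_nonneg: "\<forall>i\<in>nodes n. \<forall>j\<in>nodes n. A i j \<ge> 0" and i: "i \<in> nodes n"
  shows "j \<in> nodes n \<Longrightarrow> mpow n A k i j > 0 \<Longrightarrow>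
    \<exists>xs\<in>paths n k. xs ! 0 = i \<and> xs ! k = j \<and> (\<forall>m<k. A (xs ! m) (xs ! Suc m) > 0)"
proof (induction k arbitrary: j)
  case 0
  then show ?case
    using i by (intro bexI[of _ "[i]"]) (auto simp: paths_def split: if_splits)
next
  case (Suc k)
  have "\<exists>l\<in>nodes n. mpow n A k i l * A l j > 0"
  proof (rule ccontr)
    assume "\<not> ?thesis"
    then have "(\<Sum>l\<in>nodes n. mpow n A k i l * A l j) \<le> 0"
      by (intro sum_nonpos) (auto simp: not_less)
    with Suc.prems(2) show False
      by simp
  qed
  then obtain l where l: "l \<in> nodes n" and "mpow n A k i l * A l j > 0"
    by blast
  moreover have "A l j \<ge> 0"
    using A_nonneg l Suc.prems(1) by blast
  ultimately have "mpow n A k i l > 0" and edge: "A l j > 0"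
    by (auto simp: zero_less_mult_iff)
  then obtain xs where "xs \<in> paths n k" "xs ! 0 = i" "xs ! k = l"
    and walk: "\<forall>m<k. A (xs ! m) (xs ! Suc m) > 0"
    using Suc.IH l by blast
  moreover have "A ((xs @ [j]) ! m) ((xs @ [j]) ! Suc m) > 0" if "m < Suc k" for m
    using that walk edge \<open>xs \<in> paths n k\<close> \<open>xs ! k = l\<close>
    by (auto simp: nth_append paths_def less_Suc_eq)
  ultimately show ?case
    using Suc.prems(1) by (intro bexI[of _ "xs @ [j]"]) (auto simp: paths_def nth_append)
qed

lemma left_eigenvalue_pos:
  fixes A :: "nat \<Rightarrow> nat \<Rightarrow> real" and u :: "nat \<Rightarrow> real"
  assumes A_nonneg: "\<forall>i\<in>nodes n. \<forall>j\<in>nodes n. A i j \<ge> 0" and u_pos: "\<forall>i\<in>nodes n. u i > 0"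
    and eigen: "\<forall>j\<in>nodes n. (\<Sum>i\<in>nodes n. A i j * u i) = lam * u j"
    and i: "i \<in> nodes n" and j: "j \<in> nodes n" and "N \<ge> 1" and "mpow n A N i j > 0"
  shows "lam > 0"
proof -
  obtain xs where xs: "xs \<in> paths n N" and walk: "\<forall>m<N. A (xs ! m) (xs ! Suc m) > 0"
    using mpow_pos_imp_walk[OF A_nonneg i j] assms by blast
  define x y where "x = xs ! 0" and "y = xs ! 1"
  have x: "x \<in> nodes n" and y: "y \<in> nodes n" and edge: "A x y > 0"
    using xs walk \<open>N \<ge> 1\<close> paths_nth_in_nodes by (auto simp: x_def y_def)
  have "0 < A x y * u x"
    using edge u_pos x by simp
  also have "\<dots> \<le> (\<Sum>k\<in>nodes n. A k y * u k)"
    using A_nonneg u_pos x y by (intro member_le_sum) (auto simp: nodes_def less_imp_le)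
  also have "\<dots> = lam * u y"
    using eigen y by blast
  finally show ?thesis
    using bspec[OF u_pos y] by (simp add: zero_less_mult_iff)
qed

lemma path_measure_nonneg:
  assumes "\<forall>i\<in>nodes n. mu i \<ge> 0" and "\<forall>i\<in>nodes n. \<forall>j\<in>nodes n. w i j \<ge> 0"
    and "xs \<in> paths n N"
  shows "path_measure N mu w xs \<ge> 0"
  using assms paths_nth_in_nodes[OF assms(3)]
  unfolding path_measure_def by (intro mult_nonneg_nonneg prod_nonneg) auto

lemma path_measure_pos_along_walk:
  assumes "mu (xs ! 0) > 0" and "\<forall>m<N. w (xs ! m) (xs ! Suc m) > 0"
  shows "path_measure N mu w xs > 0"
  using assms unfolding path_measure_def by (intro mult_pos_pos prod_pos) auto

lemma bridge_mass_pos: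
  assumes mu_pos: "\<forall>i\<in>nodes n. mu i > 0" and A_nonneg: "\<forall>i\<in>nodes n. \<forall>j\<in>nodes n. A i j \<ge> 0"
    and a: "a \<in> nodes n" and b: "b \<in> nodes n" and "mpow n A N a b > 0"
  shows "sum (path_measure N mu A) (bridge_paths n N a b) > 0"
proof -
  obtain xs where xs: "xs \<in> paths n N" "xs ! 0 = a" "xs ! N = b"
    and walk: "\<forall>m<N. A (xs ! m) (xs ! Suc m) > 0"
    using mpow_pos_imp_walk[OF A_nonneg a b] assms by blast
  have "0 < path_measure N mu A xs"
    using mu_pos a xs walk by (intro path_measure_pos_along_walk) auto
  also have "\<dots> \<le> sum (path_measure N mu A) (bridge_paths n N a b)"
    using xs mu_pos A_nonneg finite_subset[OF bridge_paths_subset finite_paths]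
    by (intro member_le_sum path_measure_nonneg) (auto simp: bridge_paths_def less_imp_le)
  finally show ?thesis .
qed

lemma prod_h_transform:
  fixes h :: "nat \<Rightarrow> real"
  assumes "\<forall>k\<le>N. h (xs ! k) \<noteq> 0"
  shows "(\<Prod>k<N. h (xs ! Suc k) / (lam * h (xs ! k)) * w (xs ! k) (xs ! Suc k))
       = h (xs ! N) / (lam ^ N * h (xs ! 0)) * (\<Prod>k<N. w (xs ! k) (xs ! Suc k))"
  using assms
proof (induction N)
  case (Suc N)
  let ?W = "\<Prod>k<N. w (xs ! k) (xs ! Suc k)"
  have "h (xs ! N) \<noteq> 0"
    using Suc.prems by simp
  have "(\<Prod>k<Suc N. h (xs ! Suc k) / (lam * h (xs ! k)) * w (xs ! k) (xs ! Suc k))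
      = h (xs ! N) / (lam ^ N * h (xs ! 0)) * ?W
        * (h (xs ! Suc N) / (lam * h (xs ! N)) * w (xs ! N) (xs ! Suc N))"
    using Suc by simp
  also have "\<dots> = h (xs ! Suc N) / (lam ^ Suc N * h (xs ! 0)) * (?W * w (xs ! N) (xs ! Suc N))"
    using \<open>h (xs ! N) \<noteq> 0\<close> by (simp add: field_simps)
  finally show ?case
    by simp
qed simp

lemma path_measure_h_transform:
  fixes h :: "nat \<Rightarrow> real"
  assumes "\<forall>k\<le>N. h (xs ! k) \<noteq> 0"
  shows "path_measure N mu (\<lambda>i j. h j / (lam * h i) * w i j) xs
       = h (xs ! N) / (lam ^ N * h (xs ! 0)) * path_measure N mu w xs"
  using prod_h_transform[OF assms] by (simp add: path_measure_def)

lemma path_measure_change_initial: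
  assumes "mu' (xs ! 0) \<noteq> 0"
  shows "path_measure N mu w xs = mu (xs ! 0) / mu' (xs ! 0) * path_measure N mu' w xs"
  using assms by (simp add: path_measure_def)

lemma path_measure_h_transform_on_bridge_paths:
  fixes h :: "nat \<Rightarrow> real"
  assumes h: "\<forall>i\<in>nodes n. h i \<noteq> 0" and "mu' a \<noteq> 0" and xs: "xs \<in> bridge_paths n N a b"
  shows "path_measure N mu (\<lambda>i j. h j / (lam * h i) * w i j) xs
       = h b / (lam ^ N * h a) * (mu a / mu' a) * path_measure N mu' w xs"
proof -
  have ends: "xs ! 0 = a" "xs ! N = b" and h_nonzero: "\<forall>k\<le>N. h (xs ! k) \<noteq> 0"
    using xs h paths_nth_in_nodes by (fastforce simp: bridge_paths_def)+
  have "path_measure N mu (\<lambda>i j. h j / (lam * h i) * w i j) xs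
      = h (xs ! N) / (lam ^ N * h (xs ! 0)) * path_measure N mu w xs"
    by (rule path_measure_h_transform[OF h_nonzero])
  also have "path_measure N mu w xs = mu a / mu' a * path_measure N mu' w xs"
    using path_measure_change_initial[of mu' xs N mu w] ends \<open>mu' a \<noteq> 0\<close> by simp
  finally show ?thesis
    unfolding ends by simp
qed

theorem proposition5p2:
  fixes n N :: nat and A :: "nat \<Rightarrow> nat \<Rightarrow> real" and lam :: real
    and u v mu0 :: "nat \<Rightarrow> real"
  assumes "n \<ge> 1"
    and "adjacency_matrix n A" and "strongly_connected n A" and "aperiodic n A"
    and "N \<ge> 1" and "\<forall>i\<in>nodes n. \<forall>j\<in>nodes n. mpow n A N i j > 0"
    and "\<forall>i\<in>nodes n. u i > 0" and "\<forall>i\<in>nodes n. v i > 0"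
    and "\<forall>i\<in>nodes n. (\<Sum>j\<in>nodes n. A j i * u j) = lam * u i"
    and "\<forall>i\<in>nodes n. (\<Sum>j\<in>nodes n. A i j * v j) = lam * v i"
    and "(\<Sum>i\<in>nodes n. u i * v i) = 1"
    and "\<forall>i\<in>nodes n. mu0 i > 0"
  shows "let nuRB = (\<lambda>i. u i * v i);
             r = (\<lambda>i j. v j / (lam * v i) * A i j);
             MRB = path_measure N nuRB r;
             M = path_measure N mu0 A;
             C = bridge_set n N 1 n
         in (\<exists>P. is_minimizer n N C MRB P) \<and>
            (\<forall>P. is_minimizer n N C MRB P \<longrightarrow> is_minimizer n N C M P)"
proof -
  note u_pos = assms(7) and v_pos = assms(8) and mu0_pos = assms(12)
  define M where "M = path_measure N mu0 A"
  define MRB where "MRB = path_measure N (\<lambda>i. u i * v i) (\<lambda>i j. v j / (lam * v i) * A i j)"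
  define c where "c = v n / (lam ^ N * v 1) * (u 1 * v 1 / mu0 1)"
  have ends: "1 \<in> nodes n" "n \<in> nodes n"
    using assms(1) by (auto simp: nodes_def)
  have A_nonneg: "\<forall>i\<in>nodes n. \<forall>j\<in>nodes n. A i j \<ge> 0"
    using assms(2) by (force simp: adjacency_matrix_def)
  have "lam > 0"
    using left_eigenvalue_pos[OF A_nonneg u_pos assms(9) ends assms(5)] assms(6) ends by blast
  then have "c > 0"
    using u_pos v_pos mu0_pos ends by (auto simp: c_def)
  have M_nonneg: "\<forall>xs\<in>paths n N. M xs \<ge> 0"
    using mu0_pos A_nonneg by (auto simp: M_def less_imp_le intro!: path_measure_nonneg)
  have scaled: "\<forall>xs\<in>bridge_paths n N 1 n. MRB xs = c * M xs"
    using v_pos mu0_pos ends unfolding MRB_def M_def c_def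
    by (intro ballI path_measure_h_transform_on_bridge_paths) auto
  have "is_minimizer n N (bridge_set n N 1 n) MRB P \<longleftrightarrow> is_minimizer n N (bridge_set n N 1 n) M P"
    for P using M_nonneg \<open>c > 0\<close> scaled by (rule is_minimizer_bridge_set_scaled_reference)
  moreover have "is_minimizer n N (bridge_set n N 1 n) M (conditional_measure (bridge_paths n N 1 n) M)"
    using M_nonneg bridge_mass_pos[OF mu0_pos A_nonneg ends] assms(6) ends
    by (intro bridge_minimizer) (auto simp: M_def)
  ultimately show ?thesis
    unfolding Let_def MRB_def[symmetric] M_def[symmetric] by blast
qed

end
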